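(* Let $d\ge2$. The objects $\hat P_\emptyset$ and $\hat P_{\mathbb{Z}_d}$ are zero objects in $\mathrm{HMF}^{\mathrm{gr}}_{\mathrm{bi}}$. For nonempty proper subsets $R,S\subset\mathbb{Z}_d$ one has $\mathrm{HMF}^{\mathrm{gr}}_{\mathrm{bi}}(\hat P_R,\hat P_S)=\mathrm{ZMF}^{\mathrm{gr}}_{\mathrm{bi}}(\hat P_R,\hat P_S)$.
   Context: Let $\eta=e^{2\pi i/d}$. Graded matrix bifactorisations of $x^d$: $\mathbb{Z}_2$-graded free $\mathbb{C}[x,y]$-modules $M$ with a $\mathbb{C}$-grading compatible with the module structure ($x,y$ of degree $2/d$) and an odd $\mathbb{C}[x,y]$-linear $d^M$ of $\mathbb{C}$-degree $1$ with $d^M\circ d^M=(x^d-y^d)1_M$. $\mathrm{ZMF}^{\mathrm{gr}}_{\mathrm{bi}}(M,N)$: even $\mathbb{C}[x,y]$-linear maps $f$ of $\mathbb{C}$-degree $0$ with $d^Nf=fd^M$. $\mathrm{HMF}^{\mathrm{gr}}_{\mathrm{bi}}(M,N)$: the quotient of $\mathrm{ZMF}^{\mathrm{gr}}_{\mathrm{bi}}(M,N)$ by maps $d^Ng+gd^M$ with $g$ odd $\mathbb{C}[x,y]$-linear of $\mathbb{C}$-degree $-1$. For $S\subset\mathbb{Z}_d$, $\alpha\in\mathbb{C}$, $P_S\{\alpha\}$ has even part $\mathbb{C}[x,y]$ with $1$ in degree $\alpha$, odd part $\mathbb{C}[x,y]$ with $1$ in degree $\alpha+\frac2d|S|-1$,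 $d_1=\prod_{j\in S}(x-\eta^jy)$ (odd to even), $d_0=\prod_{j\notin S}(x-\eta^jy)$ (even to odd); $\hat P_S:=P_S\{\frac{1-|S|}{d}\}$. *)

theory Defs
  imports Complex_Main "HOL-Computational_Algebra.Polynomial"
begin

text \<open>Bivariate polynomials C[x,y] are represented as polynomials in y with
coefficients in C[x].\<close>
type_synonym bpoly = "complex poly poly"

definition bX :: bpoly where "bX = [:[:0, 1:]:]"
definition bY :: bpoly where "bY = [:0, 1:]"
definition bconst :: "complex \<Rightarrow> bpoly" where "bconst c = [:[:c:]:]"

definition homog :: "nat \<Rightarrow> bpoly \<Rightarrow> bool" where
  "homog n p \<longleftrightarrow> (\<forall>i j. coeff (coeff p j) i \<noteq> 0 \<longrightarrow> i + j = n)"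

definition hdeg :: "nat \<Rightarrow> bpoly \<Rightarrow> complex \<Rightarrow> bool" where
  "hdeg d p \<delta> \<longleftrightarrow> p = 0 \<or> (\<exists>n. homog n p \<and> 2 * of_nat n / of_nat d = \<delta>)"

text \<open>Matrices (row = target basis index, column = source basis index), zero
outside the range.  A C[x,y]-linear map of C-degree k from a graded free module
with basis degrees g (m basis elements) to one with basis degrees h (n elements).\<close>
type_synonym bmat = "nat \<Rightarrow> nat \<Rightarrow> bpoly"

definition is_hmat :: "nat \<Rightarrow> complex \<Rightarrow> nat \<Rightarrow> (nat \<Rightarrow> complex) \<Rightarrow> nat \<Rightarrow> (nat \<Rightarrow> complex) \<Rightarrow> bmat \<Rightarrow> bool" where
  "is_hmat d k m g n h F \<longleftrightarrow>
     (\<forall>i j. (n \<le> i \<or> m \<le> j) \<longrightarrow> F i j = 0) \<and>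
     (\<forall>i<n. \<forall>j<m. hdeg d (F i j) (g j + k - h i))"

definition mmul :: "nat \<Rightarrow> bmat \<Rightarrow> bmat \<Rightarrow> bmat" where
  "mmul l A B = (\<lambda>i j. \<Sum>t<l. A i t * B t j)"

definition madd :: "bmat \<Rightarrow> bmat \<Rightarrow> bmat" where
  "madd A B = (\<lambda>i j. A i j + B i j)"

definition msub :: "bmat \<Rightarrow> bmat \<Rightarrow> bmat" where
  "msub A B = (\<lambda>i j. A i j - B i j)"

definition sid :: "nat \<Rightarrow> bpoly \<Rightarrow> bmat" where
  "sid n c = (\<lambda>i j. if i = j \<and> i < n then c else 0)"

text \<open>A graded free Z2-graded module of finite rank: even basis of rank rk0 with
degrees deg0, odd basis of rank rk1 with degrees deg1; dd1 : odd \<rightarrow> even,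
dd0 : even \<rightarrow> odd.\<close>
record gmf =
  rk0 :: nat
  rk1 :: nat
  deg0 :: "nat \<Rightarrow> complex"
  deg1 :: "nat \<Rightarrow> complex"
  dd1 :: bmat
  dd0 :: bmat

definition is_gmf :: "nat \<Rightarrow> gmf \<Rightarrow> bool" where
  "is_gmf d M \<longleftrightarrow>
     is_hmat d 1 (rk1 M) (deg1 M) (rk0 M) (deg0 M) (dd1 M) \<and>
     is_hmat d 1 (rk0 M) (deg0 M) (rk1 M) (deg1 M) (dd0 M) \<and>
     mmul (rk1 M) (dd1 M) (dd0 M) = sid (rk0 M) (bX ^ d - bY ^ d) \<and>
     mmul (rk0 M) (dd0 M) (dd1 M) = sid (rk1 M) (bX ^ d - bY ^ d)"

definition ZMF :: "nat \<Rightarrow> gmf \<Rightarrow> gmf \<Rightarrow> (bmat \<times> bmat) set" where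
  "ZMF d M N = {(F0, F1).
     is_hmat d 0 (rk0 M) (deg0 M) (rk0 N) (deg0 N) F0 \<and>
     is_hmat d 0 (rk1 M) (deg1 M) (rk1 N) (deg1 N) F1 \<and>
     mmul (rk1 N) (dd1 N) F1 = mmul (rk0 M) F0 (dd1 M) \<and>
     mmul (rk0 N) (dd0 N) F0 = mmul (rk1 M) F1 (dd0 M)}"

definition nullhtp :: "nat \<Rightarrow> gmf \<Rightarrow> gmf \<Rightarrow> bmat \<times> bmat \<Rightarrow> bool" where
  "nullhtp d M N F \<longleftrightarrow> (\<exists>G0 G1.
     is_hmat d (-1) (rk0 M) (deg0 M) (rk1 N) (deg1 N) G0 \<and>
     is_hmat d (-1) (rk1 M) (deg1 M) (rk0 N) (deg0 N) G1 \<and>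
     fst F = madd (mmul (rk1 N) (dd1 N) G0) (mmul (rk1 M) G1 (dd0 M)) \<and>
     snd F = madd (mmul (rk0 N) (dd0 N) G1) (mmul (rk0 M) G0 (dd1 M)))"

definition HMF :: "nat \<Rightarrow> gmf \<Rightarrow> gmf \<Rightarrow> (bmat \<times> bmat) set set" where
  "HMF d M N = ZMF d M N // {(f, g). f \<in> ZMF d M N \<and> g \<in> ZMF d M N \<and>
      nullhtp d M N (msub (fst f) (fst g), msub (snd f) (snd g))}"

definition eta :: "nat \<Rightarrow> complex" where "eta d = exp (2 * pi * \<i> / of_nat d)"

text \<open>P_S{alpha}; subsets of Z_d are subsets of {..<d}.\<close>
definition P :: "nat \<Rightarrow> nat set \<Rightarrow> complex \<Rightarrow> gmf" where
  "P d S \<alpha> = \<lparr> rk0 = 1, rk1 = 1, deg0 = (\<lambda>_. \<alpha>),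
     deg1 = (\<lambda>_. \<alpha> + 2 * of_nat (card S) / of_nat d - 1),
     dd1 = (\<lambda>i j. if i = 0 \<and> j = 0 then (\<Prod>t\<in>S. bX - bconst (eta d ^ t) * bY) else 0),
     dd0 = (\<lambda>i j. if i = 0 \<and> j = 0 then (\<Prod>t\<in>{..<d} - S. bX - bconst (eta d ^ t) * bY) else 0) \<rparr>"

definition Phat :: "nat \<Rightarrow> nat set \<Rightarrow> gmf" where
  "Phat d S = P d S ((1 - of_nat (card S)) / of_nat d)"

definition is_zero_obj :: "nat \<Rightarrow> gmf \<Rightarrow> bool" where
  "is_zero_obj d Z \<longleftrightarrow> is_gmf d Z \<and>
     (\<forall>M. is_gmf d M \<longrightarrow> (\<exists>C. HMF d Z M = {C}) \<and> (\<exists>C. HMF d M Z = {C}))"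

end

theory Submission
  imports Defs "HOL-Computational_Algebra.Fundamental_Theorem_Algebra"
begin

(* P_{} and P_{Z_d} have rank one and one differential equal to the unit (an empty product),
   while the other one is prod_k (x - eta^k y) = x^d - y^d.  Such a factorisation is
   contractible, the unit read as an odd map h of degree -1 being a contracting homotopy:
   a closed map F out of it satisfies F = d (F h) + (F h) d, and dually for maps into it.
   Since ZMF is closed under differences, every Hom space in HMF from or to it is a single
   class.
   For nonempty proper R and S, the odd maps of degree -1 between P_R and P_S have
   entries of negative degree -(|R| + |S|)/d and (|R| + |S|)/d - 2, so they vanish:
   the only null-homotopic map is 0 and HMF coincides with ZMF. *)

lemma eta_power: "d > 0 \<Longrightarrow> eta d ^ k = cis (2 * pi * real k / real d)"
  unfolding eta_def cis_conv_exp by (simp add: exp_of_nat_mult[symmetric] mult_ac)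

lemma prod_linear_factors_roots_unity:
  assumes d: "d > 0"
  shows "(\<Prod>k<d. [:-(eta d ^ k), 1:]) = (monom 1 d - 1 :: complex poly)"
proof -
  define p :: "complex poly" where "p = monom 1 d - 1"
  have poly_p: "poly p z = z ^ d - 1" for z by (simp add: p_def poly_monom)
  have "rsquarefree p"
    unfolding rsquarefree_roots
  proof (intro allI notI)
    fix a assume "poly p a = 0 \<and> poly (pderiv p) a = 0"
    then have "a ^ d = 1" "of_nat d * a ^ (d - 1) = 0"
      by (simp_all add: poly_p p_def pderiv_diff pderiv_monom poly_monom)
    then show False using d by (auto simp: power_0_left split: if_splits)
  qed
  moreover have "lead_coeff p = 1"
  proof -
    have "coeff p n = (if n = d then 1 else if n = 0 then -1 else 0)" for n
      using d by (auto simp: p_def coeff_monom)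
    moreover from this have "degree p = d"
      by (intro antisym degree_le le_degree) auto
    ultimately show ?thesis by simp
  qed
  ultimately have "p = (\<Prod>z | z ^ d = 1. [:-z, 1:])"
    using complex_poly_decompose_rsquarefree[of p] by (simp add: poly_p)
  also have "\<dots> = (\<Prod>k<d. [:-cis (2 * pi * real k / real d), 1:])"
    by (rule prod.reindex_bij_betw[OF bij_betw_roots_unity[OF d], symmetric])
  finally show ?thesis by (simp add: p_def eta_power[OF d])
qed

lemma prod_diff_roots_unity:
  fixes a b :: complex
  assumes d: "d > 0"
  shows "(\<Prod>k<d. a - eta d ^ k * b) = a ^ d - b ^ d"
proof (cases "b = 0")
  case True
  then show ?thesis using d by (simp add: power_0_left)
next
  case False
  have "(\<Prod>k<d. a - eta d ^ k * b) = (\<Prod>k<d. b * (a / b - eta d ^ k))"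
    using False by (intro prod.cong) (auto simp: field_simps)
  also have "\<dots> = b ^ d * poly (\<Prod>k<d. [:-(eta d ^ k), 1:]) (a / b)"
    by (simp add: prod.distrib poly_prod)
  also have "\<dots> = a ^ d - b ^ d"
    using False by (simp add: prod_linear_factors_roots_unity[OF d] poly_monom field_simps)
  finally show ?thesis .
qed

definition beval :: "complex \<Rightarrow> complex \<Rightarrow> bpoly \<Rightarrow> complex" where
  "beval a b p = poly (poly p [:b:]) a"

lemma bpoly_eq_0_if_beval_eq_0:
  assumes "\<And>a b. beval a b p = 0"
  shows "p = 0"
proof -
  have "map_poly (\<lambda>c. poly c a) p = 0" for a
  proof -
    have "poly (map_poly (\<lambda>c. poly c a) p) b = beval a b p" for b
      unfolding beval_def by (induction p) (auto simp: map_poly_pCons)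
    then show ?thesis using assms poly_all_0_iff_0 by metis
  qed
  then have "poly (coeff p j) a = 0" for a j
    by (metis coeff_0 coeff_map_poly poly_0)
  then show ?thesis using poly_all_0_iff_0 by (metis poly_eq_iff coeff_0)
qed

lemma prod_linear_forms_roots_unity:
  assumes "d > 0"
  shows "(\<Prod>t<d. bX - bconst (eta d ^ t) * bY) = bX ^ d - bY ^ d"
proof -
  have "beval a b ((\<Prod>t<d. bX - bconst (eta d ^ t) * bY) - (bX ^ d - bY ^ d)) = 0" for a b
    using prod_diff_roots_unity[OF assms, of a b]
    by (simp add: beval_def poly_prod bX_def bY_def bconst_def)
  then show ?thesis using bpoly_eq_0_if_beval_eq_0 by fastforce
qed

lemma hdeg_diff:
  assumes d: "d > 0" and p: "hdeg d p \<delta>" and q: "hdeg d q \<delta>"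
  shows "hdeg d (p - q) \<delta>"
proof (cases "p = 0 \<or> q = 0")
  case True
  then show ?thesis using p q unfolding hdeg_def homog_def by auto
next
  case False
  then obtain n m where n: "homog n p" "2 * of_nat n / of_nat d = \<delta>"
    and m: "homog m q" "2 * of_nat m / of_nat d = \<delta>"
    using p q unfolding hdeg_def by auto
  then have "(2 * of_nat n :: complex) = 2 * of_nat m" using d by (simp add: divide_eq_eq)
  then have "n = m" by simp
  then have "homog n (p - q)" using n(1) m(1) unfolding homog_def by (metis coeff_diff diff_self)
  then show ?thesis using n(2) unfolding hdeg_def by auto
qed

lemma hdeg_eq_0_if_Re_neg:
  assumes "hdeg d p \<delta>" "Re \<delta> < 0"
  shows "p = 0"
proof -
  have "Re (2 * of_nat n / of_nat d) \<ge> 0" for n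
    by (simp add: Re_divide_of_nat)
  then have "\<not> (\<exists>n. homog n p \<and> 2 * of_nat n / of_nat d = \<delta>)"
    using assms(2) by (metis not_less)
  then show ?thesis using assms(1) unfolding hdeg_def by blast
qed

lemma hdeg_1_iff: "hdeg d 1 \<delta> \<longleftrightarrow> \<delta> = 0"
proof -
  have "homog n 1 \<longleftrightarrow> n = 0" for n
    unfolding homog_def by auto
  then show ?thesis unfolding hdeg_def by auto
qed

lemma hdeg_diff_powers:
  assumes "d > 0"
  shows "hdeg d (bX ^ d - bY ^ d) 2"
proof -
  have "homog d (bX ^ d - bY ^ d)"
    unfolding homog_def bX_def bY_def using assms
    by (auto simp: poly_const_pow monom_altdef[of 1, simplified, symmetric] coeff_monom coeff_pCons
        split: nat.splits if_splits)
  then show ?thesis unfolding hdeg_def using assms by auto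
qed

lemma mmul_sid_left:
  assumes "\<And>i j. n \<le> i \<Longrightarrow> A i j = 0"
  shows "mmul n (sid n 1) A = A"
proof -
  have "mmul n (sid n 1) A i j = A i j" for i j
    using assms by (cases "i < n")
      (simp_all add: mmul_def sid_def if_distrib[of "\<lambda>x. x * _"] sum.delta cong: if_cong)
  then show ?thesis by blast
qed

lemma mmul_sid_right:
  assumes "\<And>i j. m \<le> j \<Longrightarrow> A i j = 0"
  shows "mmul m A (sid m 1) = A"
proof -
  have "mmul m A (sid m 1) i j = A i j" for i j
    using assms by (cases "j < m")
      (simp_all add: mmul_def sid_def if_distrib[of "\<lambda>x. _ * x"] sum.delta cong: if_cong)
  then show ?thesis by blast
qed

lemma mmul_msub_left: "mmul l (msub A B) C = msub (mmul l A C) (mmul l B C)"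
  by (simp add: mmul_def msub_def fun_eq_iff algebra_simps sum_subtractf)

lemma mmul_msub_right: "mmul l A (msub B C) = msub (mmul l A B) (mmul l A C)"
  by (simp add: mmul_def msub_def fun_eq_iff algebra_simps sum_subtractf)

lemma mmul_zero_left [simp]: "mmul l (\<lambda>_ _. 0) A = (\<lambda>_ _. 0)"
  by (simp add: mmul_def fun_eq_iff)

lemma mmul_zero_right [simp]: "mmul l A (\<lambda>_ _. 0) = (\<lambda>_ _. 0)"
  by (simp add: mmul_def fun_eq_iff)

lemma madd_zero_left [simp]: "madd (\<lambda>_ _. 0) A = A"
  by (simp add: madd_def)

lemma madd_zero_right [simp]: "madd A (\<lambda>_ _. 0) = A"
  by (simp add: madd_def)

lemma msub_eq_zero_iff: "msub A B = (\<lambda>_ _. 0) \<longleftrightarrow> A = B"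
  by (auto simp: msub_def fun_eq_iff)

lemma msub_self [simp]: "msub A A = (\<lambda>_ _. 0)"
  by (simp add: msub_eq_zero_iff)

lemma is_hmat_zero [simp]: "is_hmat d k m g n h (\<lambda>_ _. 0)"
  by (simp add: is_hmat_def hdeg_def)

lemma is_hmat_regrade:
  assumes "is_hmat d k m g n h F"
    and "\<And>i j. i < n \<Longrightarrow> j < m \<Longrightarrow> g' j + k' - h' i = g j + k - h i"
  shows "is_hmat d k' m g' n h' F"
  using assms by (simp add: is_hmat_def)

lemma is_hmat_msub:
  assumes "d > 0" "is_hmat d k m g n h F" "is_hmat d k m g n h F'"
  shows "is_hmat d k m g n h (msub F F')"
  using assms hdeg_diff by (simp add: is_hmat_def msub_def)

lemma zero_in_ZMF: "(\<lambda>_ _. 0, \<lambda>_ _. 0) \<in> ZMF d M N"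
  by (simp add: ZMF_def)

lemma msub_in_ZMF:
  assumes "d > 0" "(F0, F1) \<in> ZMF d M N" "(F0', F1') \<in> ZMF d M N"
  shows "(msub F0 F0', msub F1 F1') \<in> ZMF d M N"
  using assms by (simp add: ZMF_def is_hmat_msub mmul_msub_left mmul_msub_right)

lemma nullhtp_zero: "nullhtp d M N (\<lambda>_ _. 0, \<lambda>_ _. 0)"
  unfolding nullhtp_def by (intro exI[of _ "\<lambda>_ _. 0"]) simp

lemma HMF_singleton_if_nullhtp:
  assumes "d > 0" "\<And>F. F \<in> ZMF d M N \<Longrightarrow> nullhtp d M N F"
  shows "\<exists>C. HMF d M N = {C}"
proof -
  have "{(f, g). f \<in> ZMF d M N \<and> g \<in> ZMF d M N \<and>
      nullhtp d M N (msub (fst f) (fst g), msub (snd f) (snd g))} = ZMF d M N \<times> ZMF d M N"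
    using assms msub_in_ZMF by fastforce
  then have "HMF d M N = {ZMF d M N}"
    unfolding HMF_def quotient_def using zero_in_ZMF[of d M N] by blast
  then show ?thesis by blast
qed

lemma HMF_eq_singletons_if_nullhtp_eq_0:
  assumes "\<And>F. nullhtp d M N F \<Longrightarrow> F = (\<lambda>_ _. 0, \<lambda>_ _. 0)"
  shows "HMF d M N = (\<lambda>f. {f}) ` ZMF d M N"
proof -
  have "nullhtp d M N (msub (fst f) (fst g), msub (snd f) (snd g)) \<longleftrightarrow> f = g" for f g
    using assms[of "(msub (fst f) (fst g), msub (snd f) (snd g))"] nullhtp_zero
    by (auto simp: msub_eq_zero_iff prod_eq_iff)
  then have "{(f, g). f \<in> ZMF d M N \<and> g \<in> ZMF d M N \<and>
      nullhtp d M N (msub (fst f) (fst g), msub (snd f) (snd g))} =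
    {(f, g). f \<in> ZMF d M N \<and> f = g}"
    by auto
  then show ?thesis unfolding HMF_def quotient_def by auto
qed

definition parity_shift :: "gmf \<Rightarrow> gmf" where
  "parity_shift M = \<lparr> rk0 = rk1 M, rk1 = rk0 M, deg0 = deg1 M, deg1 = deg0 M,
     dd1 = dd0 M, dd0 = dd1 M \<rparr>"

lemma parity_shift_simps [simp]:
  "rk0 (parity_shift M) = rk1 M" "rk1 (parity_shift M) = rk0 M"
  "deg0 (parity_shift M) = deg1 M" "deg1 (parity_shift M) = deg0 M"
  "dd0 (parity_shift M) = dd1 M" "dd1 (parity_shift M) = dd0 M"
  by (simp_all add: parity_shift_def)

lemma is_gmf_parity_shift: "is_gmf d (parity_shift M) \<longleftrightarrow> is_gmf d M"
  by (auto simp: is_gmf_def)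

lemma ZMF_parity_shift:
  "(F0, F1) \<in> ZMF d (parity_shift M) (parity_shift N) \<longleftrightarrow> (F1, F0) \<in> ZMF d M N"
  by (auto simp: ZMF_def)

lemma nullhtp_parity_shift:
  "nullhtp d (parity_shift M) (parity_shift N) (F0, F1) \<longleftrightarrow> nullhtp d M N (F1, F0)"
  unfolding nullhtp_def by auto

lemma unit_dd1_degrees:
  assumes "is_gmf d Z" "rk0 Z = 1" "rk1 Z = 1" "dd1 Z = sid 1 1"
  shows "deg0 Z 0 = deg1 Z 0 + 1"
proof -
  have "hdeg d 1 (deg1 Z 0 + 1 - deg0 Z 0)"
    using assms unfolding is_gmf_def is_hmat_def sid_def by auto
  then show ?thesis by (simp add: hdeg_1_iff algebra_simps)
qed

lemma nullhtp_from_unit_dd1: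
  assumes Z: "is_gmf d Z" "rk0 Z = 1" "rk1 Z = 1" "dd1 Z = sid 1 1"
    and F: "(F0, F1) \<in> ZMF d Z M"
  shows "nullhtp d Z M (F0, F1)"
proof -
  have F0: "is_hmat d 0 1 (deg0 Z) (rk0 M) (deg0 M) F0"
    and F1: "is_hmat d 0 1 (deg1 Z) (rk1 M) (deg1 M) F1"
    and chain: "mmul (rk1 M) (dd1 M) F1 = mmul 1 F0 (sid 1 1)"
    using F Z by (auto simp: ZMF_def)
  have "F0 = mmul (rk1 M) (dd1 M) F1"
    using chain F0 mmul_sid_right[of 1 F0] by (simp add: is_hmat_def)
  moreover have "F1 = mmul 1 F1 (sid 1 1)"
    using F1 mmul_sid_right[of 1 F1] by (simp add: is_hmat_def)
  moreover have "is_hmat d (-1) 1 (deg0 Z) (rk1 M) (deg1 M) F1"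
    by (rule is_hmat_regrade[OF F1]) (simp add: unit_dd1_degrees[OF Z])
  ultimately show ?thesis
    unfolding nullhtp_def using Z by (intro exI[of _ F1] exI[of _ "\<lambda>_ _. 0"]) simp
qed

lemma nullhtp_to_unit_dd1:
  assumes Z: "is_gmf d Z" "rk0 Z = 1" "rk1 Z = 1" "dd1 Z = sid 1 1"
    and F: "(F0, F1) \<in> ZMF d M Z"
  shows "nullhtp d M Z (F0, F1)"
proof -
  have F0: "is_hmat d 0 (rk0 M) (deg0 M) 1 (deg0 Z) F0"
    and F1: "is_hmat d 0 (rk1 M) (deg1 M) 1 (deg1 Z) F1"
    and chain: "mmul 1 (sid 1 1) F1 = mmul (rk0 M) F0 (dd1 M)"
    using F Z by (auto simp: ZMF_def)
  have "F1 = mmul (rk0 M) F0 (dd1 M)"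
    using chain F1 mmul_sid_left[of 1 F1] by (simp add: is_hmat_def)
  moreover have "F0 = mmul 1 (sid 1 1) F0"
    using F0 mmul_sid_left[of 1 F0] by (simp add: is_hmat_def)
  moreover have "is_hmat d (-1) (rk0 M) (deg0 M) 1 (deg1 Z) F0"
    by (rule is_hmat_regrade[OF F0]) (simp add: unit_dd1_degrees[OF Z])
  ultimately show ?thesis
    unfolding nullhtp_def using Z by (intro exI[of _ F0] exI[of _ "\<lambda>_ _. 0"]) simp
qed

lemma is_zero_obj_if_unit_differential:
  assumes d: "d > 0" and Z: "is_gmf d Z" "rk0 Z = 1" "rk1 Z = 1"
    and unit: "dd1 Z = sid 1 1 \<or> dd0 Z = sid 1 1"
  shows "is_zero_obj d Z"
proof -
  have nullhtp_all:
    "(\<forall>F \<in> ZMF d Z M. nullhtp d Z M F) \<and> (\<forall>F \<in> ZMF d M Z. nullhtp d M Z F)" for M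
    using unit
  proof
    assume "dd1 Z = sid 1 1"
    then show ?thesis
      unfolding Ball_def split_paired_All using nullhtp_from_unit_dd1[OF Z] nullhtp_to_unit_dd1[OF Z]
      by blast
  next
    assume "dd0 Z = sid 1 1"
    then have Z': "is_gmf d (parity_shift Z)" "rk0 (parity_shift Z) = 1"
      "rk1 (parity_shift Z) = 1" "dd1 (parity_shift Z) = sid 1 1"
      using Z by (simp_all add: is_gmf_parity_shift)
    have "nullhtp d Z M (F0, F1)" if "(F0, F1) \<in> ZMF d Z M" for F0 F1
    proof -
      have "nullhtp d (parity_shift Z) (parity_shift M) (F1, F0)"
        by (rule nullhtp_from_unit_dd1[OF Z']) (simp add: ZMF_parity_shift that)
      then show ?thesis by (simp add: nullhtp_parity_shift)
    qed
    moreover have "nullhtp d M Z (F0, F1)" if "(F0, F1) \<in> ZMF d M Z" for F0 F1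
    proof -
      have "nullhtp d (parity_shift M) (parity_shift Z) (F1, F0)"
        by (rule nullhtp_to_unit_dd1[OF Z']) (simp add: ZMF_parity_shift that)
      then show ?thesis by (simp add: nullhtp_parity_shift)
    qed
    ultimately show ?thesis unfolding Ball_def split_paired_All by blast
  qed
  show ?thesis
    unfolding is_zero_obj_def
  proof (intro conjI allI impI Z(1))
    fix M
    show "\<exists>C. HMF d Z M = {C}" "\<exists>C. HMF d M Z = {C}"
      using nullhtp_all[of M] by (auto intro!: HMF_singleton_if_nullhtp[OF d])
  qed
qed

lemma is_hmat_1x1_eq_0:
  assumes "is_hmat d k 1 g 1 h G" "Re (g 0 + k - h 0) < 0"
  shows "G = (\<lambda>_ _. 0)"
proof -
  have "hdeg d (G 0 0) (g 0 + k - h 0)"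
    using assms(1) by (simp add: is_hmat_def)
  then have "G 0 0 = 0"
    using assms(2) by (rule hdeg_eq_0_if_Re_neg)
  moreover have "G i j = 0" if "i \<noteq> 0 \<or> j \<noteq> 0" for i j
    using assms(1) that by (auto simp: is_hmat_def Suc_le_eq)
  ultimately show ?thesis by (intro ext) metis
qed

lemma nullhtp_Phat_eq_0:
  assumes R: "0 < card R" "card R < d" and S: "0 < card S" "card S < d"
    and F: "nullhtp d (Phat d R) (Phat d S) F"
  shows "F = (\<lambda>_ _. 0, \<lambda>_ _. 0)"
proof -
  obtain G0 G1 where
    G0: "is_hmat d (-1) 1 (deg0 (Phat d R)) 1 (deg1 (Phat d S)) G0" and
    G1: "is_hmat d (-1) 1 (deg1 (Phat d R)) 1 (deg0 (Phat d S)) G1" and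
    F: "F = (madd (mmul 1 (dd1 (Phat d S)) G0) (mmul 1 G1 (dd0 (Phat d R))),
             madd (mmul 1 (dd0 (Phat d S)) G1) (mmul 1 G0 (dd1 (Phat d R))))"
    using F unfolding nullhtp_def by (auto simp: Phat_def P_def prod_eq_iff)
  have "Re (deg0 (Phat d R) 0 + -1 - deg1 (Phat d S) 0) = - (card R + card S) / d"
    by (simp add: Phat_def P_def Re_divide_of_nat diff_divide_distrib add_divide_distrib)
  also have "\<dots> < 0"
    using R S by (simp add: divide_neg_pos)
  finally have G0_eq_0: "G0 = (\<lambda>_ _. 0)" by (rule is_hmat_1x1_eq_0[OF G0])
  have "Re (deg1 (Phat d R) 0 + -1 - deg0 (Phat d S) 0) = (card R + card S) / d - 2"
    by (simp add: Phat_def P_def Re_divide_of_nat diff_divide_distrib add_divide_distrib)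
  also have "\<dots> < 0"
    using R S by (simp add: divide_less_eq)
  finally have G1_eq_0: "G1 = (\<lambda>_ _. 0)" by (rule is_hmat_1x1_eq_0[OF G1])
  show ?thesis using F G0_eq_0 G1_eq_0 by simp
qed

lemma is_gmf_P_empty_or_full:
  assumes d: "d > 0" and S: "S = {} \<or> S = {..<d}"
  shows "is_gmf d (P d S \<alpha>)"
  using S d unfolding is_gmf_def is_hmat_def P_def
  by (elim disjE) (simp_all add: mmul_def sid_def fun_eq_iff prod_linear_forms_roots_unity
      hdeg_1_iff hdeg_diff_powers)

theorem lemma3p13:
  fixes d :: nat
  assumes "d \<ge> 2"
  shows "is_zero_obj d (Phat d {}) \<and> is_zero_obj d (Phat d {..<d}) \<and>
    (\<forall>R S. R \<noteq> {} \<and> R \<subset> {..<d} \<and> S \<noteq> {} \<and> S \<subset> {..<d} \<longrightarrow>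
       HMF d (Phat d R) (Phat d S) = (\<lambda>f. {f}) ` ZMF d (Phat d R) (Phat d S))"
proof (intro conjI allI impI)
  have d: "d > 0" using assms by simp
  have gmf: "is_gmf d (Phat d S)" if "S = {} \<or> S = {..<d}" for S
    unfolding Phat_def using d that by (rule is_gmf_P_empty_or_full)
  show "is_zero_obj d (Phat d {})" "is_zero_obj d (Phat d {..<d})"
    by (rule is_zero_obj_if_unit_differential[OF d gmf];
        use d in \<open>simp add: Phat_def P_def sid_def fun_eq_iff\<close>)+
  fix R S assume "R \<noteq> {} \<and> R \<subset> {..<d} \<and> S \<noteq> {} \<and> S \<subset> {..<d}"
  then have "0 < card R" "card R < d" "0 < card S" "card S < d"
    using psubset_card_mono[of "{..<d}"] by (auto simp: card_gt_0_iff intro: finite_subset)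
  then show "HMF d (Phat d R) (Phat d S) = (\<lambda>f. {f}) ` ZMF d (Phat d R) (Phat d S)"
    by (intro HMF_eq_singletons_if_nullhtp_eq_0 nullhtp_Phat_eq_0)
qed

end
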